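(* Let $R$ be a generalized Rickart $*$-ring. Then the following are equivalent: (1) $R$ satisfies the parallelogram law; (2) whenever projections $e,f$ are in position $p'$, $e\sim f$.
   Context: A $*$-ring is an associative ring $R$ with an involution $x\mapsto x^*$ (additive, $(xy)^*=y^*x^*$, $x^{**}=x$). A projection is an element $e$ with $e=e^*=e^2$; projections are partially ordered by $e\le f$ iff $e=ef$, and $\wedge,\vee$ denote infimum and supremum in this poset. $e\sim f$ means there is $w\in R$ with $w^*w=e$, $ww^*=f$. For $a\in R$, $r(a)=\{b: ab=0\}$. $R$ is a generalized Rickart $*$-ring if for every $x$ there exist $n\ge1$ and a projection $g$ with $r(x^n)=gR$; such a ring has identity $1$. $R$ satisfies the parallelogram law if $e-e\wedge f\sim e\vee f-f$ for every pair of projections $e,f$ for which $e\wedge f$ and $e\vee f$ exist. Projections $e,f$ are in position $p'$ if $e\wedge(1-f)=0$ and $e\vee(1-f)=1$. *)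

theory Defs
  imports Main
begin

definition involution :: "('a::ring_1 \<Rightarrow> 'a) \<Rightarrow> bool" where
  "involution s \<longleftrightarrow> (\<forall>x y. s (x + y) = s x + s y) \<and> (\<forall>x y. s (x * y) = s y * s x)
     \<and> (\<forall>x. s (s x) = x)"

definition is_proj :: "('a::ring_1 \<Rightarrow> 'a) \<Rightarrow> 'a \<Rightarrow> bool" where
  "is_proj s e \<longleftrightarrow> e = s e \<and> e = e * e"

definition proj_le :: "'a::ring_1 \<Rightarrow> 'a \<Rightarrow> bool" where
  "proj_le e f \<longleftrightarrow> e = e * f"

definition is_proj_inf :: "('a::ring_1 \<Rightarrow> 'a) \<Rightarrow> 'a \<Rightarrow> 'a \<Rightarrow> 'a \<Rightarrow> bool" where
  "is_proj_inf s e f m \<longleftrightarrow> is_proj s m \<and> proj_le m e \<and> proj_le m f \<and>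
     (\<forall>g. is_proj s g \<and> proj_le g e \<and> proj_le g f \<longrightarrow> proj_le g m)"

definition is_proj_sup :: "('a::ring_1 \<Rightarrow> 'a) \<Rightarrow> 'a \<Rightarrow> 'a \<Rightarrow> 'a \<Rightarrow> bool" where
  "is_proj_sup s e f j \<longleftrightarrow> is_proj s j \<and> proj_le e j \<and> proj_le f j \<and>
     (\<forall>g. is_proj s g \<and> proj_le e g \<and> proj_le f g \<longrightarrow> proj_le j g)"

definition proj_equiv :: "('a::ring_1 \<Rightarrow> 'a) \<Rightarrow> 'a \<Rightarrow> 'a \<Rightarrow> bool" where
  "proj_equiv s e f \<longleftrightarrow> (\<exists>w. s w * w = e \<and> w * s w = f)"

definition right_annihilator :: "'a::ring_1 \<Rightarrow> 'a set" where
  "right_annihilator a = {b. a * b = 0}"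

definition generalized_rickart :: "('a::ring_1 \<Rightarrow> 'a) \<Rightarrow> bool" where
  "generalized_rickart s \<longleftrightarrow> (\<forall>x. \<exists>n\<ge>1. \<exists>g. is_proj s g \<and>
      right_annihilator (x ^ n) = {g * y | y. True})"

definition parallelogram_law :: "('a::ring_1 \<Rightarrow> 'a) \<Rightarrow> bool" where
  "parallelogram_law s \<longleftrightarrow> (\<forall>e f m j. is_proj s e \<and> is_proj s f \<and>
      is_proj_inf s e f m \<and> is_proj_sup s e f j \<longrightarrow> proj_equiv s (e - m) (j - f))"

definition position_p' :: "('a::ring_1 \<Rightarrow> 'a) \<Rightarrow> 'a \<Rightarrow> 'a \<Rightarrow> bool" where
  "position_p' s e f \<longleftrightarrow> is_proj_inf s e (1 - f) 0 \<and> is_proj_sup s e (1 - f) 1"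

end

theory Submission
  imports Defs
begin

text \<open>If \<open>e, f\<close> have infimum \<open>m\<close> and supremum \<open>j\<close>, then \<open>e - m\<close> and \<open>1 - (j - f)\<close> have
  infimum \<open>0\<close> and supremum \<open>1\<close>, i.e. \<open>e - m\<close> and \<open>j - f\<close> are in position p', so (2) yields the
  parallelogram law. Conversely, \<open>e, f\<close> in position p' is exactly the situation of the
  parallelogram law for \<open>e\<close> and \<open>1 - f\<close>, whose conclusion is \<open>e \<sim> 1 - (1 - f) = f\<close>.\<close>

lemma involution_one: "involution s \<Longrightarrow> s 1 = 1"
  unfolding involution_def by (metis mult_1_left mult_1_right)

lemma involution_zero: "involution s \<Longrightarrow> s 0 = 0"
  unfolding involution_def by (metis add_cancel_right_right)

lemma involution_diff: "involution s \<Longrightarrow> s (a - b) = s a - s b"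
  unfolding involution_def by (metis add_diff_cancel diff_add_cancel)

lemma involution_mult: "involution s \<Longrightarrow> s (a * b) = s b * s a"
  unfolding involution_def by blast

lemma is_proj_idem: "is_proj s e \<Longrightarrow> e * e = e"
  unfolding is_proj_def by simp

lemma proj_le_mult_left:
  assumes "involution s" "is_proj s e" "is_proj s f" "proj_le e f"
  shows "f * e = e"
proof -
  have "e = s (e * f)" using assms(2,4) unfolding is_proj_def proj_le_def by simp
  also have "\<dots> = f * e"
    using involution_mult[OF assms(1)] assms(2,3) unfolding is_proj_def by metis
  finally show ?thesis by simp
qed

lemma is_proj_diff:
  assumes "involution s" "is_proj s e" "is_proj s f" "proj_le f e"
  shows "is_proj s (e - f)"
proof -
  have "f * e = f" using assms(4) unfolding proj_le_def by simp
  moreover have "e * f = f" using proj_le_mult_left[OF assms(1,3,2,4)] .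
  ultimately have "(e - f) * (e - f) = e - f"
    using assms(2,3) by (simp add: algebra_simps is_proj_idem)
  then show ?thesis using assms(2,3) involution_diff[OF assms(1)] unfolding is_proj_def
    by simp
qed

lemma is_proj_one: "involution s \<Longrightarrow> is_proj s 1"
  using involution_one unfolding is_proj_def by auto

lemma is_proj_zero: "involution s \<Longrightarrow> is_proj s 0"
  using involution_zero unfolding is_proj_def by auto

lemma is_proj_one_minus:
  assumes "involution s" "is_proj s f"
  shows "is_proj s (1 - f)"
  using is_proj_diff[OF assms(1) is_proj_one[OF assms(1)] assms(2)] by (simp add: proj_le_def)

lemma is_proj_sup_diff_complement:
  assumes "involution s" "is_proj s f" "is_proj_sup s e f j" "proj_le m f"
  shows "is_proj_sup s (e - m) (1 - (j - f)) 1"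
  unfolding is_proj_sup_def proj_le_def
proof (intro conjI allI impI)
  have pj: "is_proj s j" and fj: "f * j = f"
    and jsup: "\<And>g. is_proj s g \<Longrightarrow> e * g = e \<Longrightarrow> f * g = f \<Longrightarrow> j * g = j"
    using assms(3) unfolding is_proj_sup_def proj_le_def by metis+
  have jf: "j * f = f"
    using proj_le_mult_left[OF assms(1,2) pj] fj by (simp add: proj_le_def)
  have mf: "m * f = m" using assms(4) unfolding proj_le_def by simp
  show "is_proj s 1" using is_proj_one[OF assms(1)] .
  show "e - m = (e - m) * 1" "1 - (j - f) = (1 - (j - f)) * 1" by simp_all
  fix h
  assume h: "is_proj s h \<and> e - m = (e - m) * h \<and> 1 - (j - f) = (1 - (j - f)) * h"
  have "f * (1 - (j - f)) = f"
    using fj is_proj_idem[OF assms(2)] by (simp add: algebra_simps)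
  then have fh: "f * h = f" using h by (metis mult.assoc)
  then have "m * h = m" using mf by (metis mult.assoc)
  then have "e * h = e" using h by (simp add: algebra_simps)
  then have "j * h = j" using jsup h fh by blast
  moreover have "(1 - j) * (1 - (j - f)) = 1 - j"
    using jf is_proj_idem[OF pj] by (simp add: algebra_simps)
  then have "(1 - j) * h = 1 - j" using h by (metis mult.assoc)
  ultimately show "1 = 1 * h" by (simp add: algebra_simps)
qed

lemma is_proj_inf_diff_complement:
  assumes "involution s" "is_proj s e" "is_proj_inf s e f m" "proj_le e j"
  shows "is_proj_inf s (e - m) (1 - (j - f)) 0"
  unfolding is_proj_inf_def proj_le_def
proof (intro conjI allI impI)
  have me: "m * e = m"
    and minf: "\<And>g. is_proj s g \<Longrightarrow> g * e = g \<Longrightarrow> g * f = g \<Longrightarrow> g * m = g"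
    using assms(3) unfolding is_proj_inf_def proj_le_def by metis+
  have ej: "e * j = e" using assms(4) unfolding proj_le_def by simp
  show "is_proj s 0" using is_proj_zero[OF assms(1)] .
  show "0 = 0 * (e - m)" "0 = 0 * (1 - (j - f))" by simp_all
  fix h
  assume h: "is_proj s h \<and> h = h * (e - m) \<and> h = h * (1 - (j - f))"
  have "(e - m) * e = e - m" using is_proj_idem[OF assms(2)] me by (simp add: algebra_simps)
  then have he: "h * e = h" using h by (metis mult.assoc)
  then have "h * j = h" using ej by (metis mult.assoc)
  then have hf: "h * f = h" using h by (simp add: algebra_simps)
  have "h * m = h" using minf h he hf by blast
  then show "h = h * 0" using h he by (simp add: algebra_simps)
qed

lemma position_p'_diff_inf_diff_sup:
  assumes "involution s" "is_proj s e" "is_proj s f"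
    and "is_proj_inf s e f m" "is_proj_sup s e f j"
  shows "position_p' s (e - m) (j - f)"
proof -
  have "proj_le m f" "proj_le e j"
    using assms(4,5) unfolding is_proj_inf_def is_proj_sup_def by simp_all
  then show ?thesis
    unfolding position_p'_def
    using is_proj_inf_diff_complement[OF assms(1,2,4)] is_proj_sup_diff_complement[OF assms(1,3,5)]
    by simp
qed

lemma proj_equiv_if_position_p':
  assumes "involution s" "parallelogram_law s" "is_proj s e" "is_proj s f" "position_p' s e f"
  shows "proj_equiv s e f"
proof -
  have "proj_equiv s (e - 0) (1 - (1 - f))"
    using assms is_proj_one_minus[OF assms(1,4)]
    unfolding parallelogram_law_def position_p'_def by blast
  then show ?thesis by simp
qed

theorem mainTheorem17:
  fixes s :: "'a::ring_1 \<Rightarrow> 'a"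
  assumes "involution s"
    and "generalized_rickart s"
  shows "parallelogram_law s \<longleftrightarrow>
    (\<forall>e f. is_proj s e \<and> is_proj s f \<and> position_p' s e f \<longrightarrow> proj_equiv s e f)"
proof
  assume "parallelogram_law s"
  then show "\<forall>e f. is_proj s e \<and> is_proj s f \<and> position_p' s e f \<longrightarrow> proj_equiv s e f"
    using proj_equiv_if_position_p'[OF assms(1)] by blast
next
  assume p': "\<forall>e f. is_proj s e \<and> is_proj s f \<and> position_p' s e f \<longrightarrow> proj_equiv s e f"
  show "parallelogram_law s"
    unfolding parallelogram_law_def
  proof (intro allI impI)
    fix e f m j
    assume efmj: "is_proj s e \<and> is_proj s f \<and> is_proj_inf s e f m \<and> is_proj_sup s e f j"
    then have "is_proj s (e - m)" "is_proj s (j - f)"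
      using is_proj_diff[OF assms(1)]
      unfolding is_proj_inf_def is_proj_sup_def by simp_all
    then show "proj_equiv s (e - m) (j - f)"
      using p' position_p'_diff_inf_diff_sup[OF assms(1)] efmj by blast
  qed
qed

end
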